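(* Let $H$ be a $d$-regular graph on $h$ vertices and let $G$ be any $n$-lift of $H$. For any induced subgraph $G'$ of $G$ with $|V(G')|\le n-h\sqrt{n}$, we have $\lambda^*(G)\ge \lambda(G')-7/2$.
   Context: Let $H$ be a graph with vertex set $[h]$. An $n$-lift $G$ of $H$ has vertex set $\{(i,j): i\in[h], j\in[n]\}$ with fibres $V_i=\{(i,j):j\in[n]\}$; for each edge $ii'$ of $H$ there is a perfect matching between $V_i$ and $V_{i'}$, and these are the only edges. Let $M$ be the adjacency matrix of $G$. The eigenvalues of $M$ on the ($M$-invariant) subspace of vectors balanced on every fibre ($\sum_{v\in V_i}x_v=0$ for all $i$) are the new eigenvalues; $\lambda^*(G)$ is the largest absolute value of a new eigenvalue. $\lambda(F)$ is the largest adjacency eigenvalue of a graph $F$. *)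

theory Defs
  imports Complex_Main
begin

(* Base graph H on vertex set {0..<h} (i.e. [h], 0-based), given by an edge relation. *)
definition simple_graph_on :: "nat \<Rightarrow> (nat \<Rightarrow> nat \<Rightarrow> bool) \<Rightarrow> bool" where
  "simple_graph_on h H \<longleftrightarrow>
     (\<forall>i i'. H i i' \<longrightarrow> i < h \<and> i' < h \<and> H i' i \<and> i \<noteq> i')"

definition regular_graph :: "nat \<Rightarrow> (nat \<Rightarrow> nat \<Rightarrow> bool) \<Rightarrow> nat \<Rightarrow> bool" where
  "regular_graph h H d \<longleftrightarrow> simple_graph_on h H \<and> (\<forall>i<h. card {i'. H i i'} = d)"

(* vertex set of an n-lift: pairs (i,j), i<h, j<n; fibre V_i = {(i,j). j<n} *)
definition lift_vertices :: "nat \<Rightarrow> nat \<Rightarrow> (nat \<times> nat) set" where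
  "lift_vertices h n = {0..<h} \<times> {0..<n}"

(* G is an n-lift of H: G is a symmetric edge relation on the lift vertices, every edge
   lies between fibres V_i, V_i' with ii' an edge of H, and for each edge ii' of H the
   edges between V_i and V_i' form a perfect matching. *)
definition is_lift :: "nat \<Rightarrow> nat \<Rightarrow> (nat \<Rightarrow> nat \<Rightarrow> bool) \<Rightarrow> (nat \<times> nat \<Rightarrow> nat \<times> nat \<Rightarrow> bool) \<Rightarrow> bool" where
  "is_lift h n H G \<longleftrightarrow>
     (\<forall>u v. G u v \<longrightarrow> G v u \<and> u \<in> lift_vertices h n \<and> v \<in> lift_vertices h n \<and> H (fst u) (fst v)) \<and>
     (\<forall>i i'. H i i' \<longrightarrow> (\<forall>j<n. \<exists>!j'. j' < n \<and> G (i, j) (i', j')))"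

definition adj_apply :: "'a set \<Rightarrow> ('a \<Rightarrow> 'a \<Rightarrow> bool) \<Rightarrow> ('a \<Rightarrow> real) \<Rightarrow> 'a \<Rightarrow> real" where
  "adj_apply V E x v = (\<Sum>w\<in>{w\<in>V. E v w}. x w)"

definition adj_eigenvalue :: "'a set \<Rightarrow> ('a \<Rightarrow> 'a \<Rightarrow> bool) \<Rightarrow> real \<Rightarrow> bool" where
  "adj_eigenvalue V E \<mu> \<longleftrightarrow>
     (\<exists>x. (\<exists>v\<in>V. x v \<noteq> 0) \<and> (\<forall>v\<in>V. adj_apply V E x v = \<mu> * x v))"

definition lambda_max :: "'a set \<Rightarrow> ('a \<Rightarrow> 'a \<Rightarrow> bool) \<Rightarrow> real" where
  "lambda_max V E = Max {\<mu>. adj_eigenvalue V E \<mu>}"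

(* mu is a new eigenvalue of the lift G: eigenvalue of the adjacency matrix on the
   (invariant) subspace of vectors balanced on every fibre *)
definition new_eigenvalue :: "nat \<Rightarrow> nat \<Rightarrow> (nat \<times> nat \<Rightarrow> nat \<times> nat \<Rightarrow> bool) \<Rightarrow> real \<Rightarrow> bool" where
  "new_eigenvalue h n G \<mu> \<longleftrightarrow>
     (\<exists>x. (\<exists>v\<in>lift_vertices h n. x v \<noteq> 0) \<and>
          (\<forall>i<h. (\<Sum>j<n. x (i, j)) = 0) \<and>
          (\<forall>v\<in>lift_vertices h n. adj_apply (lift_vertices h n) G x v = \<mu> * x v))"

definition lambda_star :: "nat \<Rightarrow> nat \<Rightarrow> (nat \<times> nat \<Rightarrow> nat \<times> nat \<Rightarrow> bool) \<Rightarrow> real" where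
  "lambda_star h n G = Max {\<bar>\<mu>\<bar> | \<mu>. new_eigenvalue h n G \<mu>}"

end

theory Submission
  imports Defs "HOL-Analysis.Function_Topology" "HOL-Analysis.Convex" "Jordan_Normal_Form.Char_Poly"
begin

(*
  Let x be an eigenvector of the induced subgraph G[S] for its largest
  eigenvalue mu0, extended by zero to all of G, and let y be its projection onto the space of
  vectors balanced on every fibre, i.e. x minus its fibre averages.  With s_i the fibre sums
  of x and T = sum_i |s_i|, the projection changes the Rayleigh data only by terms of size
  T^2/n, and Cauchy-Schwarz gives T^2 <= |S| * |x|^2 < n * |x|^2.  Hence the Rayleigh quotient
  of y is larger than mu0 - 1.  By the variational principle for the symmetric adjacency
  operator restricted to the invariant balanced subspace, some new eigenvalue mu dominates
  this quotient, so lambda^*(G) >= |mu| > lambda(G[S]) - 1, which is stronger than the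
  claimed bound with 7/2.
*)

section \<open>The adjacency operator of a finite graph\<close>

lemma adj_apply_if:
  "finite V \<Longrightarrow> adj_apply V E x v = (\<Sum>w\<in>V. if E v w then x w else 0)"
  unfolding adj_apply_def by (simp add: sum.inter_filter)

lemma adj_apply_linear:
  "adj_apply V E (\<lambda>v. a v + t * b v) w = adj_apply V E a w + t * adj_apply V E b w"
  unfolding adj_apply_def by (simp add: sum.distrib sum_distrib_left)

lemma adj_apply_cong:
  "(\<And>v. v \<in> V \<Longrightarrow> a v = b v) \<Longrightarrow> adj_apply V E a w = adj_apply V E b w"
  unfolding adj_apply_def by (rule sum.cong) auto

text \<open>Enumerating the vertices turns the adjacency operator into a square matrix; every
  eigenvalue of the operator is a root of the characteristic polynomial of that matrix.\<close>

lemma adj_eigenvalue_char_poly_root: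
  fixes V :: "'a set" and f :: "nat \<Rightarrow> 'a"
  assumes fin: "finite V" and f: "bij_betw f {0..<k} V" and eig: "adj_eigenvalue V E \<mu>"
  defines "A \<equiv> mat k k (\<lambda>(i, j). if E (f i) (f j) then 1 else 0) :: real mat"
  shows "poly (char_poly A) \<mu> = 0"
proof -
  have A: "A \<in> carrier_mat k k" by (simp add: A_def)
  obtain x where x0: "\<exists>v\<in>V. x v \<noteq> 0" and xe: "\<forall>v\<in>V. adj_apply V E x v = \<mu> * x v"
    using eig by (auto simp: adj_eigenvalue_def)
  define v where "v = vec k (\<lambda>i. x (f i))"
  have "v \<noteq> 0\<^sub>v k"
  proof
    assume v0: "v = 0\<^sub>v k"
    from x0 obtain w where w: "w \<in> V" "x w \<noteq> 0" by blast
    then obtain i where "i < k" "f i = w" using f unfolding bij_betw_def by auto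
    then have "x w = vec_index v i" by (simp add: v_def)
    with v0 \<open>i < k\<close> w show False by simp
  qed
  moreover have "A *\<^sub>v v = \<mu> \<cdot>\<^sub>v v"
  proof (rule eq_vecI)
    fix i assume "i < dim_vec (\<mu> \<cdot>\<^sub>v v)"
    hence i: "i < k" by (simp add: v_def)
    have "vec_index (A *\<^sub>v v) i = (\<Sum>j\<in>{0..<k}. (if E (f i) (f j) then 1 else 0) * x (f j))"
      using i A by (simp add: A_def v_def scalar_prod_def)
    also have "\<dots> = (\<Sum>j\<in>{0..<k}. (\<lambda>w. if E (f i) w then x w else 0) (f j))"
      by (rule sum.cong) auto
    also have "\<dots> = (\<Sum>w\<in>V. if E (f i) w then x w else 0)"
      by (rule sum.reindex_bij_betw[OF f])
    also have "\<dots> = \<mu> * x (f i)"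
      using xe f i fin unfolding bij_betw_def by (auto simp: adj_apply_if)
    finally show "vec_index (A *\<^sub>v v) i = vec_index (\<mu> \<cdot>\<^sub>v v) i" using i by (simp add: v_def)
  qed (use A in \<open>simp add: v_def\<close>)
  moreover have "v \<in> carrier_vec k" by (simp add: v_def)
  ultimately have "eigenvector A v \<mu>" using A by (simp add: eigenvector_def)
  hence "eigenvalue A \<mu>" unfolding eigenvalue_def by blast
  thus ?thesis using eigenvalue_root_char_poly[OF A] by simp
qed

text \<open>A finite graph has only finitely many adjacency eigenvalues; this makes the maxima
  in the definitions of lambda_max and lambda_star meaningful.\<close>

lemma finite_adj_eigenvalues:
  assumes fin: "finite V"
  shows "finite {\<mu>. adj_eigenvalue V E \<mu>}"
proof -
  obtain f where f: "bij_betw f {0..<card V} V" using ex_bij_betw_nat_finite[OF fin] by blast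
  define A :: "real mat" where "A = mat (card V) (card V) (\<lambda>(i,j). if E (f i) (f j) then 1 else 0)"
  have "{\<mu>. adj_eigenvalue V E \<mu>} \<subseteq> {\<mu>. poly (char_poly A) \<mu> = 0}"
    using adj_eigenvalue_char_poly_root[OF fin f] by (auto simp: A_def)
  moreover have "char_poly A \<noteq> 0" using degree_monic_char_poly[of A "card V"] by (auto simp: A_def)
  ultimately show ?thesis using poly_roots_finite finite_subset by blast
qed

definition quad_form :: "'a set \<Rightarrow> ('a \<Rightarrow> 'a \<Rightarrow> bool) \<Rightarrow> ('a \<Rightarrow> real) \<Rightarrow> real" where
  "quad_form V E z = (\<Sum>v\<in>V. z v * adj_apply V E z v)"

definition bilin_form :: "'a set \<Rightarrow> ('a \<Rightarrow> 'a \<Rightarrow> bool) \<Rightarrow> ('a \<Rightarrow> real) \<Rightarrow> ('a \<Rightarrow> real) \<Rightarrow> real" where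
  "bilin_form V E a b = (\<Sum>v\<in>V. a v * adj_apply V E b v)"

definition sq_norm :: "'a set \<Rightarrow> ('a \<Rightarrow> real) \<Rightarrow> real" where
  "sq_norm V z = (\<Sum>v\<in>V. (z v)^2)"

definition inner_on :: "'a set \<Rightarrow> ('a \<Rightarrow> real) \<Rightarrow> ('a \<Rightarrow> real) \<Rightarrow> real" where
  "inner_on V a b = (\<Sum>v\<in>V. a v * b v)"

lemma bilin_form_sym:
  assumes fin: "finite V" and sym: "\<And>u v. u \<in> V \<Longrightarrow> v \<in> V \<Longrightarrow> E u v \<Longrightarrow> E v u"
  shows "bilin_form V E a b = bilin_form V E b a"
proof -
  have "bilin_form V E a b = (\<Sum>v\<in>V. \<Sum>w\<in>V. if E v w then a v * b w else 0)"
    unfolding bilin_form_def using fin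
    by (simp add: adj_apply_if sum_distrib_left if_distrib cong: if_cong)
  also have "\<dots> = (\<Sum>w\<in>V. \<Sum>v\<in>V. if E v w then a v * b w else 0)" by (rule sum.swap)
  also have "\<dots> = (\<Sum>w\<in>V. \<Sum>v\<in>V. if E w v then b w * a v else 0)"
    by (intro sum.cong refl) (auto dest: sym)
  also have "\<dots> = bilin_form V E b a"
    unfolding bilin_form_def using fin
    by (simp add: adj_apply_if sum_distrib_left if_distrib cong: if_cong)
  finally show ?thesis .
qed

lemma quad_form_expand:
  assumes fin: "finite V" and sym: "\<And>u v. u \<in> V \<Longrightarrow> v \<in> V \<Longrightarrow> E u v \<Longrightarrow> E v u"
  shows "quad_form V E (\<lambda>v. a v + t * b v)
           = quad_form V E a + 2 * t * bilin_form V E b a + t^2 * quad_form V E b"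
proof -
  have "quad_form V E (\<lambda>v. a v + t * b v)
        = bilin_form V E a a + t * bilin_form V E a b + t * bilin_form V E b a + t^2 * bilin_form V E b b"
    unfolding quad_form_def bilin_form_def adj_apply_linear
    by (simp add: algebra_simps power2_eq_square sum.distrib sum_distrib_left)
  also have "bilin_form V E a b = bilin_form V E b a" by (rule bilin_form_sym[OF fin sym])
  finally show ?thesis unfolding quad_form_def bilin_form_def by simp
qed

lemma sq_norm_expand:
  "sq_norm V (\<lambda>v. a v + t * b v) = sq_norm V a + 2 * t * inner_on V a b + t^2 * sq_norm V b"
  unfolding sq_norm_def inner_on_def
  by (simp add: algebra_simps power2_eq_square sum.distrib sum_distrib_left)

lemma quad_form_scale: "quad_form V E (\<lambda>v. c * a v) = c^2 * quad_form V E a"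
  unfolding quad_form_def adj_apply_def by (simp add: algebra_simps power2_eq_square sum_distrib_left)

lemma sq_norm_scale: "sq_norm V (\<lambda>v. c * a v) = c^2 * sq_norm V a"
  unfolding sq_norm_def by (simp add: algebra_simps power2_eq_square sum_distrib_left)

lemma quad_form_cong: "(\<And>v. v \<in> V \<Longrightarrow> a v = b v) \<Longrightarrow> quad_form V E a = quad_form V E b"
  unfolding quad_form_def using adj_apply_cong[of V a b E] by (metis (no_types, lifting) sum.cong)

lemma sq_norm_cong: "(\<And>v. v \<in> V \<Longrightarrow> a v = b v) \<Longrightarrow> sq_norm V a = sq_norm V b"
  unfolding sq_norm_def by (rule sum.cong) auto

lemma sq_norm_nonneg: "sq_norm V a \<ge> 0"
  unfolding sq_norm_def by (rule sum_nonneg) simp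

lemma sq_norm_zero: "finite V \<Longrightarrow> sq_norm V a = 0 \<Longrightarrow> v \<in> V \<Longrightarrow> a v = 0"
  unfolding sq_norm_def by (simp add: sum_nonneg_eq_0_iff)

lemma sq_norm_pos: "finite V \<Longrightarrow> v \<in> V \<Longrightarrow> a v \<noteq> 0 \<Longrightarrow> sq_norm V a > 0"
  using sq_norm_zero sq_norm_nonneg by (metis order_less_le)

lemma nonzero_of_sq_norm_pos:
  assumes "sq_norm V a > 0"
  shows "\<exists>v\<in>V. a v \<noteq> 0"
proof (rule ccontr)
  assume "\<not> (\<exists>v\<in>V. a v \<noteq> 0)"
  hence "sq_norm V a = 0" unfolding sq_norm_def by simp
  thus False using assms by simp
qed

lemma quad_form_of_sq_norm_zero: "finite V \<Longrightarrow> sq_norm V a = 0 \<Longrightarrow> quad_form V E a = 0"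
  using quad_form_cong[of V a "\<lambda>_. 0" E] sq_norm_zero[of V a] by (simp add: quad_form_def)

lemma quad_form_eigenvector:
  "(\<forall>v\<in>V. adj_apply V E x v = \<mu> * x v) \<Longrightarrow> quad_form V E x = \<mu> * sq_norm V x"
  unfolding quad_form_def sq_norm_def
  by (simp add: sum_distrib_left power2_eq_square mult_ac)

text \<open>Extending a function on S by zero to a larger vertex set V does not change its
  quadratic form: the induced subgraph G[S] sees exactly the edges of G inside S.\<close>

lemma quad_form_extend_zero:
  assumes fin: "finite V" and S: "S \<subseteq> V"
  shows "quad_form V E (\<lambda>v. if v \<in> S then x v else 0) = quad_form S E x"
proof -
  have finS: "finite S" using finite_subset[OF S fin] .
  have adj: "adj_apply V E (\<lambda>v. if v \<in> S then x v else 0) v = adj_apply S E x v" for v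
    unfolding adj_apply_if[OF fin] adj_apply_if[OF finS]
    by (rule sum.mono_neutral_cong_right[OF fin S]) auto
  show ?thesis unfolding quad_form_def adj
    by (rule sum.mono_neutral_cong_right[OF fin S]) auto
qed

lemma sq_norm_extend_zero:
  assumes fin: "finite V" and S: "S \<subseteq> V"
  shows "sq_norm V (\<lambda>v. if v \<in> S then x v else 0) = sq_norm S x"
  unfolding sq_norm_def by (rule sum.mono_neutral_cong_right[OF fin S]) auto

section \<open>The variational principle on invariant subspaces\<close>

abbreviation fun_space :: "'a set \<Rightarrow> ('a \<Rightarrow> real) topology" where
  "fun_space V \<equiv> product_topology (\<lambda>_. euclideanreal) V"

lemma unit_sphere_closed:
  assumes fin: "finite V"
  shows "closedin (fun_space V) {z \<in> topspace (fun_space V). sq_norm V z = 1}"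
proof -
  have "continuous_map (fun_space V) euclideanreal (sq_norm V)"
    unfolding sq_norm_def by (intro continuous_intros) (use fin in auto)
  hence "closedin (fun_space V) {z \<in> topspace (fun_space V). sq_norm V z \<in> {1}}"
    by (rule closedin_continuous_map_preimage) simp
  thus ?thesis by simp
qed

lemma unit_sphere_compact:
  assumes fin: "finite V"
  shows "compactin (fun_space V) {z \<in> topspace (fun_space V). sq_norm V z = 1}"
proof (rule closed_compactin[OF _ _ unit_sphere_closed[OF fin]])
  show "compactin (fun_space V) (PiE V (\<lambda>_. {-1..1}))" by (subst compactin_PiE) simp
  show "{z \<in> topspace (fun_space V). sq_norm V z = 1} \<subseteq> PiE V (\<lambda>_. {-1..1})"
  proof
    fix z assume z: "z \<in> {z \<in> topspace (fun_space V). sq_norm V z = 1}"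
    have "z v \<in> {-1..1}" if "v \<in> V" for v
    proof -
      have "(z v)^2 \<le> sq_norm V z"
        unfolding sq_norm_def by (rule member_le_sum) (use that fin in auto)
      thus ?thesis using z abs_square_le_1 by (auto simp: abs_le_iff)
    qed
    thus "z \<in> PiE V (\<lambda>_. {-1..1})" using z by (auto simp: PiE_def)
  qed
qed

lemma rescale_to_unit_sphere:
  assumes pos: "sq_norm V w > 0"
  defines "w' \<equiv> restrict (\<lambda>v. (1 / sqrt (sq_norm V w)) * w v) V"
  shows "w' \<in> topspace (fun_space V)" and "sq_norm V w' = 1"
    and "quad_form V E w' = quad_form V E w / sq_norm V w"
proof -
  define c where "c = 1 / sqrt (sq_norm V w)"
  have c2: "c^2 = 1 / sq_norm V w" using pos by (simp add: c_def power_divide)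
  show "w' \<in> topspace (fun_space V)" by (simp add: w'_def)
  have "sq_norm V w' = sq_norm V (\<lambda>v. c * w v)" by (rule sq_norm_cong) (simp add: w'_def c_def)
  also have "\<dots> = 1" using pos by (simp add: sq_norm_scale c2)
  finally show "sq_norm V w' = 1" .
  have "quad_form V E w' = quad_form V E (\<lambda>v. c * w v)" by (rule quad_form_cong) (simp add: w'_def c_def)
  also have "\<dots> = quad_form V E w / sq_norm V w" by (simp add: quad_form_scale c2)
  finally show "quad_form V E w' = quad_form V E w / sq_norm V w" .
qed

lemma rayleigh_quotient_attains_max:
  fixes V :: "'a set" and E :: "'a \<Rightarrow> 'a \<Rightarrow> bool" and W :: "('a \<Rightarrow> real) \<Rightarrow> bool"
  assumes fin: "finite V"
    and Wscale: "\<And>a t. W a \<Longrightarrow> W (\<lambda>v. t * a v)"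
    and Wcong: "\<And>a b. W a \<Longrightarrow> (\<forall>v\<in>V. a v = b v) \<Longrightarrow> W b"
    and Wclosed: "closedin (fun_space V) {z \<in> topspace (fun_space V). W z}"
    and Wy: "W y" and y0: "\<exists>v\<in>V. y v \<noteq> 0"
  shows "\<exists>u. W u \<and> sq_norm V u = 1 \<and> (\<forall>w. W w \<longrightarrow> quad_form V E w \<le> quad_form V E u * sq_norm V w)"
proof -
  define K where "K = {z \<in> topspace (fun_space V). W z} \<inter> {z \<in> topspace (fun_space V). sq_norm V z = 1}"
  have "compactin (fun_space V) K"
    unfolding K_def
    by (rule closed_compactin[OF unit_sphere_compact[OF fin] _ closedin_Int[OF Wclosed unit_sphere_closed[OF fin]]])
      auto
  moreover have "continuous_map (fun_space V) euclideanreal (quad_form V E)"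
    unfolding quad_form_def adj_apply_def by (intro continuous_intros) (use fin in auto)
  ultimately have cpt: "compact (quad_form V E ` K)" using image_compactin by fastforce
  have rescale: "\<exists>w'\<in>K. quad_form V E w' = quad_form V E w / sq_norm V w"
    if Ww: "W w" and pos: "sq_norm V w > 0" for w
  proof -
    define w' where "w' = restrict (\<lambda>v. (1 / sqrt (sq_norm V w)) * w v) V"
    have "W (\<lambda>v. (1 / sqrt (sq_norm V w)) * w v)" by (rule Wscale[OF Ww])
    moreover have "\<forall>v\<in>V. (1 / sqrt (sq_norm V w)) * w v = w' v" by (simp add: w'_def)
    ultimately have "W w'" by (rule Wcong)
    thus ?thesis using rescale_to_unit_sphere[OF pos] unfolding K_def w'_def[symmetric] by blast
  qed
  have "K \<noteq> {}" using rescale[OF Wy] sq_norm_pos[OF fin] y0 by blast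
  then obtain L where "L \<in> quad_form V E ` K" and Lmax: "\<forall>t\<in>quad_form V E ` K. t \<le> L"
    using compact_attains_sup[OF cpt] by (metis image_is_empty)
  then obtain u where uK: "u \<in> K" and Lu: "L = quad_form V E u" by blast
  have "quad_form V E w \<le> L * sq_norm V w" if Ww: "W w" for w
  proof (cases "sq_norm V w > 0")
    case True
    then obtain w' where "w' \<in> K" "quad_form V E w' = quad_form V E w / sq_norm V w"
      using rescale[OF Ww] by blast
    hence "quad_form V E w / sq_norm V w \<le> L" using Lmax by force
    thus ?thesis using True by (simp add: divide_le_eq mult.commute)
  next
    case False
    hence "sq_norm V w = 0" using sq_norm_nonneg[of V w] by linarith
    thus ?thesis using quad_form_of_sq_norm_zero[OF fin] by simp
  qed
  thus ?thesis using uK Lu by (auto simp: K_def)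
qed

text \<open>A real number a \<ge> 0 with 2 t a \<le> t^2 c for all t must vanish (take t small and positive).\<close>

lemma quadratic_bound_forces_zero:
  fixes a c :: real
  assumes bound: "\<And>t. 2 * t * a \<le> t^2 * c" and a0: "a \<ge> 0"
  shows "a = 0"
proof (rule ccontr)
  assume "a \<noteq> 0"
  hence ap: "a > 0" using a0 by linarith
  define t where "t = a / (\<bar>c\<bar> + 1)"
  have tp: "t > 0" using ap by (simp add: t_def)
  have "2 * a \<le> t * c" using bound[of t] tp by (simp add: power2_eq_square)
  also have "t * c \<le> t * \<bar>c\<bar>" using tp by (simp add: mult_left_mono)
  also have "t * \<bar>c\<bar> = a * (\<bar>c\<bar> / (\<bar>c\<bar> + 1))" by (simp add: t_def)
  also have "\<dots> < a * 1" using ap by (intro mult_strict_left_mono) auto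
  finally show False using ap by simp
qed

text \<open>A maximiser of the Rayleigh quotient on an invariant subspace is an eigenvector: the
  residual z = A u - L u lies in the subspace, and perturbing u in direction z shows z = 0.\<close>

lemma rayleigh_maximiser_is_eigenvector:
  fixes V :: "'a set" and E :: "'a \<Rightarrow> 'a \<Rightarrow> bool" and W :: "('a \<Rightarrow> real) \<Rightarrow> bool"
  assumes fin: "finite V"
    and sym: "\<And>u v. u \<in> V \<Longrightarrow> v \<in> V \<Longrightarrow> E u v \<Longrightarrow> E v u"
    and Wadd: "\<And>a b. W a \<Longrightarrow> W b \<Longrightarrow> W (\<lambda>v. a v + b v)"
    and Wscale: "\<And>a t. W a \<Longrightarrow> W (\<lambda>v. t * a v)"
    and Winv: "\<And>a. W a \<Longrightarrow> W (adj_apply V E a)"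
    and Wu: "W u" and unit: "sq_norm V u = 1"
    and max: "\<And>w. W w \<Longrightarrow> quad_form V E w \<le> quad_form V E u * sq_norm V w"
  shows "\<forall>v\<in>V. adj_apply V E u v = quad_form V E u * u v"
proof -
  define L where "L = quad_form V E u"
  define z where "z = (\<lambda>v. adj_apply V E u v + (-L) * u v)"
  have Wz: "W z" unfolding z_def by (rule Wadd[OF Winv[OF Wu] Wscale[OF Wu]])
  have uz: "inner_on V u z = 0"
  proof -
    have "inner_on V u z = quad_form V E u - L * sq_norm V u"
      unfolding inner_on_def quad_form_def sq_norm_def z_def
      by (simp add: algebra_simps power2_eq_square sum.distrib sum_distrib_left sum_subtractf)
    thus ?thesis using unit by (simp add: L_def)
  qed
  have zu: "bilin_form V E z u = sq_norm V z"
  proof -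
    have "bilin_form V E z u = (\<Sum>v\<in>V. z v * (z v + L * u v))"
      unfolding bilin_form_def by (rule sum.cong) (auto simp: z_def)
    also have "\<dots> = sq_norm V z + L * inner_on V u z"
      unfolding sq_norm_def inner_on_def
      by (simp add: algebra_simps power2_eq_square sum.distrib sum_distrib_left)
    finally show ?thesis using uz by simp
  qed
  have "2 * t * sq_norm V z \<le> t^2 * (L * sq_norm V z - quad_form V E z)" for t
  proof -
    have "quad_form V E (\<lambda>v. u v + t * z v) \<le> L * sq_norm V (\<lambda>v. u v + t * z v)"
      unfolding L_def by (rule max[OF Wadd[OF Wu Wscale[OF Wz]]])
    moreover have "quad_form V E (\<lambda>v. u v + t * z v) = L + 2 * t * sq_norm V z + t^2 * quad_form V E z"
      by (simp add: quad_form_expand[OF fin sym] zu L_def)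
    moreover have "sq_norm V (\<lambda>v. u v + t * z v) = 1 + t^2 * sq_norm V z"
      by (simp add: sq_norm_expand uz unit)
    ultimately show ?thesis by (simp add: algebra_simps)
  qed
  hence "sq_norm V z = 0" by (rule quadratic_bound_forces_zero[OF _ sq_norm_nonneg])
  hence "z v = 0" if "v \<in> V" for v using sq_norm_zero[OF fin _ that] by blast
  thus ?thesis by (simp add: z_def L_def)
qed

lemma variational_principle:
  fixes V :: "'a set" and E :: "'a \<Rightarrow> 'a \<Rightarrow> bool" and W :: "('a \<Rightarrow> real) \<Rightarrow> bool"
  assumes fin: "finite V"
    and sym: "\<And>u v. u \<in> V \<Longrightarrow> v \<in> V \<Longrightarrow> E u v \<Longrightarrow> E v u"
    and Wadd: "\<And>a b. W a \<Longrightarrow> W b \<Longrightarrow> W (\<lambda>v. a v + b v)"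
    and Wscale: "\<And>a t. W a \<Longrightarrow> W (\<lambda>v. t * a v)"
    and Wcong: "\<And>a b. W a \<Longrightarrow> (\<forall>v\<in>V. a v = b v) \<Longrightarrow> W b"
    and Winv: "\<And>a. W a \<Longrightarrow> W (adj_apply V E a)"
    and Wclosed: "closedin (fun_space V) {z \<in> topspace (fun_space V). W z}"
    and Wy: "W y" and y0: "\<exists>v\<in>V. y v \<noteq> 0"
  shows "\<exists>u \<mu>. W u \<and> (\<exists>v\<in>V. u v \<noteq> 0) \<and> (\<forall>v\<in>V. adj_apply V E u v = \<mu> * u v)
              \<and> quad_form V E y \<le> \<mu> * sq_norm V y"
proof -
  have "\<exists>u. W u \<and> sq_norm V u = 1
           \<and> (\<forall>w. W w \<longrightarrow> quad_form V E w \<le> quad_form V E u * sq_norm V w)"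
    by (rule rayleigh_quotient_attains_max) (fact fin Wscale Wcong Wclosed Wy y0)+
  then obtain u where Wu: "W u" and unit: "sq_norm V u = 1"
    and max: "\<And>w. W w \<Longrightarrow> quad_form V E w \<le> quad_form V E u * sq_norm V w"
    by blast
  have "\<forall>v\<in>V. adj_apply V E u v = quad_form V E u * u v"
    by (rule rayleigh_maximiser_is_eigenvector[where W=W]) (fact fin sym Wadd Wscale Winv Wu unit max)+
  moreover have "\<exists>v\<in>V. u v \<noteq> 0" by (rule nonzero_of_sq_norm_pos) (simp add: unit)
  ultimately show ?thesis using Wu max[OF Wy] by blast
qed

lemma lambda_max_is_eigenvalue:
  assumes fin: "finite V" and ne: "V \<noteq> {}"
    and sym: "\<And>u v. u \<in> V \<Longrightarrow> v \<in> V \<Longrightarrow> E u v \<Longrightarrow> E v u"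
  shows "adj_eigenvalue V E (lambda_max V E)"
proof -
  have "\<exists>u \<mu>. True \<and> (\<exists>v\<in>V. u v \<noteq> 0) \<and> (\<forall>v\<in>V. adj_apply V E u v = \<mu> * u v)
          \<and> quad_form V E (\<lambda>_. 1) \<le> \<mu> * sq_norm V (\<lambda>_. 1)"
  proof (rule variational_principle[where W="\<lambda>_. True" and y="\<lambda>_. 1"])
    show "closedin (fun_space V) {z \<in> topspace (fun_space V). True}"
      using closedin_topspace[of "fun_space V"] by simp
    show "\<exists>v\<in>V. (1::real) \<noteq> 0" using ne by auto
  qed (auto intro: fin sym)
  hence "{\<mu>. adj_eigenvalue V E \<mu>} \<noteq> {}" unfolding adj_eigenvalue_def by blast
  thus ?thesis using Max_in[OF finite_adj_eigenvalues[OF fin]] by (simp add: lambda_max_def)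
qed

section \<open>Lifts and the balanced subspace\<close>

lemma lift_sym: "is_lift h n H G \<Longrightarrow> G u v \<Longrightarrow> G v u"
  unfolding is_lift_def by blast

lemma finite_lift_vertices: "finite (lift_vertices h n)"
  unfolding lift_vertices_def by simp

lemma sum_lift_vertices: "(\<Sum>v\<in>lift_vertices h n. F v) = (\<Sum>i<h. \<Sum>j<n. F (i, j))"
  unfolding lift_vertices_def by (simp add: sum.cartesian_product atLeast0LessThan)

lemma lift_neighbours_by_fibre:
  assumes lift: "is_lift h n H G" and i: "i < h" and j: "j < n"
  shows "(\<Sum>w\<in>{w\<in>lift_vertices h n. G (i, j) w}. f (fst w)) = (\<Sum>i'\<in>{i'. H i i'}. f i')"
proof -
  define N where "N = {w\<in>lift_vertices h n. G (i, j) w}"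
  have edge: "\<And>u v. G u v \<Longrightarrow> u \<in> lift_vertices h n \<and> v \<in> lift_vertices h n \<and> H (fst u) (fst v)"
    and matching: "\<And>i i'. H i i' \<Longrightarrow> (\<forall>j<n. \<exists>!j'. j' < n \<and> G (i, j) (i', j'))"
    using lift unfolding is_lift_def by blast+
  have inj: "inj_on fst N"
  proof
    fix w1 w2 assume w: "w1 \<in> N" "w2 \<in> N" "fst w1 = fst w2"
    obtain i1 j1 i2 j2 where w12: "w1 = (i1, j1)" "w2 = (i2, j2)" by (cases w1, cases w2)
    have g: "G (i, j) (i1, j1)" "G (i, j) (i2, j2)" and "j1 < n" "j2 < n" "i1 = i2"
      using w w12 by (auto simp: N_def lift_vertices_def)
    moreover have "\<exists>!j'. j' < n \<and> G (i, j) (i1, j')" using matching[of i i1] edge[OF g(1)] j by simp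
    ultimately show "w1 = w2" using w12 by blast
  qed
  have image: "fst ` N = {i'. H i i'}"
  proof
    show "fst ` N \<subseteq> {i'. H i i'}" using edge by (force simp: N_def)
    show "{i'. H i i'} \<subseteq> fst ` N"
    proof
      fix i' assume "i' \<in> {i'. H i i'}"
      then obtain j' where "j' < n" "G (i, j) (i', j')" using matching j by blast
      hence "(i', j') \<in> N" using edge by (auto simp: N_def)
      thus "i' \<in> fst ` N" by force
    qed
  qed
  have "(\<Sum>i'\<in>{i'. H i i'}. f i') = (\<Sum>w\<in>N. f (fst w))"
    unfolding image[symmetric] by (simp add: sum.reindex[OF inj])
  thus ?thesis by (simp add: N_def)
qed

lemma adj_apply_fibre_constant:
  assumes lift: "is_lift h n H G" and v: "v \<in> lift_vertices h n"
  shows "adj_apply (lift_vertices h n) G (\<lambda>w. f (fst w)) v = (\<Sum>i'\<in>{i'. H (fst v) i'}. f i')"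
proof -
  obtain i j where vij: "v = (i, j)" "i < h" "j < n" using v by (auto simp: lift_vertices_def)
  thus ?thesis unfolding adj_apply_def using lift_neighbours_by_fibre[OF lift] by simp
qed

definition fibre_sum :: "nat \<Rightarrow> (nat \<times> nat \<Rightarrow> real) \<Rightarrow> nat \<Rightarrow> real" where
  "fibre_sum n x i = (\<Sum>j<n. x (i, j))"

definition balanced :: "nat \<Rightarrow> nat \<Rightarrow> (nat \<times> nat \<Rightarrow> real) \<Rightarrow> bool" where
  "balanced h n z \<longleftrightarrow> (\<forall>i<h. fibre_sum n z i = 0)"

lemma new_eigenvalue_iff:
  "new_eigenvalue h n G \<mu> \<longleftrightarrow>
     (\<exists>x. (\<exists>v\<in>lift_vertices h n. x v \<noteq> 0) \<and> balanced h n x \<and>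
          (\<forall>v\<in>lift_vertices h n. adj_apply (lift_vertices h n) G x v = \<mu> * x v))"
  unfolding new_eigenvalue_def balanced_def fibre_sum_def ..

lemma balanced_orthogonal:
  assumes "balanced h n z"
  shows "(\<Sum>v\<in>lift_vertices h n. z v * c (fst v)) = 0"
proof -
  have "(\<Sum>v\<in>lift_vertices h n. z v * c (fst v)) = (\<Sum>i<h. c i * fibre_sum n z i)"
    unfolding sum_lift_vertices fibre_sum_def by (simp add: sum_distrib_left mult_ac)
  thus ?thesis using assms by (simp add: balanced_def)
qed

lemma balanced_cong:
  "balanced h n a \<Longrightarrow> (\<forall>v\<in>lift_vertices h n. a v = b v) \<Longrightarrow> balanced h n b"
  unfolding balanced_def fibre_sum_def lift_vertices_def by simp

text \<open>The balanced subspace is invariant under the adjacency operator: the fibre sum of A a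
  over fibre i is the inner product of a with A applied to the indicator of that fibre, which
  is fibre-constant.\<close>

lemma balanced_adj_invariant:
  assumes lift: "is_lift h n H G" and bal: "balanced h n a"
  shows "balanced h n (adj_apply (lift_vertices h n) G a)"
  unfolding balanced_def
proof (intro allI impI)
  fix i assume i: "i < h"
  define LV where "LV = lift_vertices h n"
  define e :: "nat \<Rightarrow> real" where "e = (\<lambda>i'. if i' = i then 1 else 0)"
  have symV: "\<And>u v. u \<in> LV \<Longrightarrow> v \<in> LV \<Longrightarrow> G u v \<Longrightarrow> G v u"
    using lift_sym[OF lift] by blast
  have "bilin_form LV G (\<lambda>w. e (fst w)) a
        = (\<Sum>i'<h. if i' = i then fibre_sum n (adj_apply LV G a) i else 0)"
    unfolding bilin_form_def LV_def sum_lift_vertices fibre_sum_def e_def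
    by (intro sum.cong refl) auto
  hence "fibre_sum n (adj_apply LV G a) i = bilin_form LV G (\<lambda>w. e (fst w)) a"
    using i by simp
  also have "\<dots> = bilin_form LV G a (\<lambda>w. e (fst w))"
    by (rule bilin_form_sym[OF _ symV]) (simp add: LV_def finite_lift_vertices)
  also have "\<dots> = (\<Sum>v\<in>LV. a v * (\<lambda>i0. \<Sum>i'\<in>{i'. H i0 i'}. e i') (fst v))"
    unfolding bilin_form_def LV_def by (intro sum.cong refl) (simp add: adj_apply_fibre_constant[OF lift])
  also have "\<dots> = 0" unfolding LV_def by (rule balanced_orthogonal[OF bal])
  finally show "fibre_sum n (adj_apply (lift_vertices h n) G a) i = 0" by (simp add: LV_def)
qed

lemma balanced_closed:
  "closedin (fun_space (lift_vertices h n)) {z \<in> topspace (fun_space (lift_vertices h n)). balanced h n z}"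
proof -
  define F where "F = (\<lambda>z::nat\<times>nat\<Rightarrow>real. \<Sum>i<h. (fibre_sum n z i)^2)"
  have cont: "continuous_map (fun_space (lift_vertices h n)) euclideanreal F"
    unfolding F_def fibre_sum_def by (intro continuous_intros) (auto simp: lift_vertices_def)
  have "balanced h n z \<longleftrightarrow> F z \<in> {0}" for z
    unfolding balanced_def F_def by (simp add: sum_nonneg_eq_0_iff Ball_def)
  thus ?thesis using closedin_continuous_map_preimage[OF cont, of "{0}"] by simp
qed

lemma new_eigenvalue_le_lambda_star:
  assumes "new_eigenvalue h n G \<mu>"
  shows "\<bar>\<mu>\<bar> \<le> lambda_star h n G"
proof -
  have "{\<mu>. new_eigenvalue h n G \<mu>} \<subseteq> {\<mu>. adj_eigenvalue (lift_vertices h n) G \<mu>}"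
    unfolding new_eigenvalue_def adj_eigenvalue_def by blast
  hence "finite {\<mu>. new_eigenvalue h n G \<mu>}"
    using finite_adj_eigenvalues[OF finite_lift_vertices] finite_subset by blast
  hence "finite {\<bar>\<mu>\<bar> |\<mu>. new_eigenvalue h n G \<mu>}" by (simp add: setcompr_eq_image)
  thus ?thesis unfolding lambda_star_def by (rule Max_ge) (use assms in blast)
qed

lemma balanced_rayleigh_bound:
  assumes lift: "is_lift h n H G" and bal: "balanced h n y"
    and y0: "\<exists>v\<in>lift_vertices h n. y v \<noteq> 0"
  shows "\<exists>\<mu>. new_eigenvalue h n G \<mu>
              \<and> quad_form (lift_vertices h n) G y \<le> \<mu> * sq_norm (lift_vertices h n) y"
proof -
  have "\<exists>u \<mu>. balanced h n u \<and> (\<exists>v\<in>lift_vertices h n. u v \<noteq> 0)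
          \<and> (\<forall>v\<in>lift_vertices h n. adj_apply (lift_vertices h n) G u v = \<mu> * u v)
          \<and> quad_form (lift_vertices h n) G y \<le> \<mu> * sq_norm (lift_vertices h n) y"
  proof (rule variational_principle[OF finite_lift_vertices _ _ _ balanced_cong
        balanced_adj_invariant[OF lift] balanced_closed bal y0])
    show "\<And>a b. balanced h n a \<Longrightarrow> balanced h n b \<Longrightarrow> balanced h n (\<lambda>v. a v + b v)"
      unfolding balanced_def fibre_sum_def by (simp add: sum.distrib)
    show "\<And>a t. balanced h n a \<Longrightarrow> balanced h n (\<lambda>v. t * a v)"
      unfolding balanced_def fibre_sum_def by (simp add: sum_distrib_left[symmetric])
  qed (use lift_sym[OF lift] in blast)
  thus ?thesis unfolding new_eigenvalue_iff by blast
qed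

section \<open>Projecting onto the balanced subspace\<close>

text \<open>Subtracting the fibre averages is the orthogonal projection onto balanced vectors.\<close>

definition fibre_mean :: "nat \<Rightarrow> (nat \<times> nat \<Rightarrow> real) \<Rightarrow> nat \<times> nat \<Rightarrow> real" where
  "fibre_mean n x v = fibre_sum n x (fst v) / real n"

definition balanced_part :: "nat \<Rightarrow> (nat \<times> nat \<Rightarrow> real) \<Rightarrow> nat \<times> nat \<Rightarrow> real" where
  "balanced_part n x v = x v + (-1) * fibre_mean n x v"

lemma balanced_part_balanced: "n > 0 \<Longrightarrow> balanced h n (balanced_part n x)"
  unfolding balanced_def balanced_part_def fibre_mean_def fibre_sum_def
  by (simp add: sum_subtractf)

lemma sq_norm_balanced_part:
  assumes n: "n > 0"
  shows "sq_norm (lift_vertices h n) (balanced_part n x)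
           = sq_norm (lift_vertices h n) x - (\<Sum>i<h. (fibre_sum n x i)^2 / real n)"
proof -
  have "(\<Sum>j<n. x (i, j) * (fibre_sum n x i / real n)) = fibre_sum n x i * (fibre_sum n x i / real n)"
    for i by (simp only: sum_distrib_right[symmetric] fibre_sum_def)
  hence "inner_on (lift_vertices h n) x (fibre_mean n x) = (\<Sum>i<h. (fibre_sum n x i)^2 / real n)"
    unfolding inner_on_def sum_lift_vertices fibre_mean_def fst_conv by (simp add: power2_eq_square)
  moreover have "sq_norm (lift_vertices h n) (fibre_mean n x) = (\<Sum>i<h. (fibre_sum n x i)^2 / real n)"
    unfolding sq_norm_def sum_lift_vertices fibre_mean_def using n
    by (simp add: power_divide power2_eq_square)
  ultimately show ?thesis
    unfolding balanced_part_def[abs_def] sq_norm_expand by simp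
qed

text \<open>Since the balanced part is orthogonal to the fibre-constant vector A(fibre_mean x),
  projecting x lowers its quadratic form exactly by the base-graph term sum_i s_i g_i.\<close>

lemma quad_form_balanced_part:
  assumes lift: "is_lift h n H G" and n: "n > 0"
  shows "quad_form (lift_vertices h n) G (balanced_part n x)
           = quad_form (lift_vertices h n) G x
             - (\<Sum>i<h. fibre_sum n x i * (\<Sum>i'\<in>{i'. H i i'}. fibre_sum n x i' / real n))"
proof -
  define LV where "LV = lift_vertices h n"
  define y where "y = balanced_part n x"
  define g where "g = (\<lambda>i. \<Sum>i'\<in>{i'. H i i'}. fibre_sum n x i' / real n)"
  have symV: "\<And>u v. u \<in> LV \<Longrightarrow> v \<in> LV \<Longrightarrow> G u v \<Longrightarrow> G v u" using lift_sym[OF lift] by blast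
  have finLV: "finite LV" by (simp add: LV_def finite_lift_vertices)
  have Amean: "adj_apply LV G (fibre_mean n x) v = g (fst v)" if "v \<in> LV" for v
    using adj_apply_fibre_constant[OF lift, of v "\<lambda>i. fibre_sum n x i / real n"] that
    by (simp add: LV_def g_def fibre_mean_def[abs_def])
  have "quad_form LV G y = (\<Sum>v\<in>LV. y v * adj_apply LV G x v) - (\<Sum>v\<in>LV. y v * g (fst v))"
    unfolding quad_form_def y_def balanced_part_def[abs_def] adj_apply_linear
    by (simp add: Amean right_diff_distrib sum_subtractf)
  also have "(\<Sum>v\<in>LV. y v * g (fst v)) = 0"
    unfolding LV_def y_def by (rule balanced_orthogonal[OF balanced_part_balanced[OF n]])
  also have "(\<Sum>v\<in>LV. y v * adj_apply LV G x v) = quad_form LV G x - bilin_form LV G (fibre_mean n x) x"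
    unfolding quad_form_def bilin_form_def y_def balanced_part_def by (simp add: algebra_simps sum_subtractf)
  also have "bilin_form LV G (fibre_mean n x) x = bilin_form LV G x (fibre_mean n x)"
    by (rule bilin_form_sym[OF finLV symV])
  also have "\<dots> = (\<Sum>v\<in>LV. x v * g (fst v))"
    unfolding bilin_form_def by (intro sum.cong refl) (simp add: Amean)
  also have "\<dots> = (\<Sum>i<h. fibre_sum n x i * g i)"
    unfolding LV_def sum_lift_vertices fibre_sum_def by (simp add: sum_distrib_right)
  finally show ?thesis by (simp add: LV_def y_def g_def)
qed

lemma sum_squares_le_l1_squared:
  fixes s :: "nat \<Rightarrow> real"
  shows "(\<Sum>i<h. (s i)^2 / real n) \<le> (\<Sum>i<h. \<bar>s i\<bar>)^2 / real n"
proof -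
  define T where "T = (\<Sum>i<h. \<bar>s i\<bar>)"
  have "(s i)^2 / real n \<le> \<bar>s i\<bar> * (T / real n)" if "i \<in> {..<h}" for i
  proof -
    have "\<bar>s i\<bar> \<le> T" unfolding T_def by (rule member_le_sum) (use that in auto)
    hence "\<bar>s i\<bar> * \<bar>s i\<bar> \<le> \<bar>s i\<bar> * T" by (rule mult_left_mono) simp
    hence "(s i)^2 \<le> \<bar>s i\<bar> * T" by (simp add: power2_eq_square abs_mult_self_eq)
    thus ?thesis by (simp add: divide_right_mono)
  qed
  hence "(\<Sum>i<h. (s i)^2 / real n) \<le> (\<Sum>i<h. \<bar>s i\<bar> * (T / real n))" by (rule sum_mono)
  thus ?thesis
    by (simp add: T_def sum_divide_distrib[symmetric] sum_distrib_right[symmetric] power2_eq_square)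
qed

lemma base_correction_le_l1_squared:
  fixes s :: "nat \<Rightarrow> real"
  assumes simple: "simple_graph_on h H"
  shows "(\<Sum>i<h. s i * (\<Sum>i'\<in>{i'. H i i'}. s i' / real n)) \<le> (\<Sum>i<h. \<bar>s i\<bar>)^2 / real n"
proof -
  define T where "T = (\<Sum>i<h. \<bar>s i\<bar>)"
  have neighbour_bound: "\<bar>\<Sum>i'\<in>{i'. H i i'}. s i' / real n\<bar> \<le> T / real n" for i
  proof -
    have sub: "{i'. H i i'} \<subseteq> {..<h}" using simple by (auto simp: simple_graph_on_def)
    have "\<bar>\<Sum>i'\<in>{i'. H i i'}. s i' / real n\<bar> \<le> (\<Sum>i'\<in>{i'. H i i'}. \<bar>s i' / real n\<bar>)" by (rule sum_abs)
    also have "\<dots> \<le> (\<Sum>i'<h. \<bar>s i' / real n\<bar>)" by (rule sum_mono2[OF _ sub]) auto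
    finally show ?thesis by (simp add: T_def sum_divide_distrib)
  qed
  have "s i * (\<Sum>i'\<in>{i'. H i i'}. s i' / real n) \<le> \<bar>s i\<bar> * (T / real n)" for i
  proof -
    have "s i * (\<Sum>i'\<in>{i'. H i i'}. s i' / real n) \<le> \<bar>s i\<bar> * \<bar>\<Sum>i'\<in>{i'. H i i'}. s i' / real n\<bar>"
      by (simp add: abs_mult[symmetric])
    also have "\<dots> \<le> \<bar>s i\<bar> * (T / real n)"
      by (rule mult_left_mono) (simp_all add: neighbour_bound)
    finally show ?thesis .
  qed
  hence "(\<Sum>i<h. s i * (\<Sum>i'\<in>{i'. H i i'}. s i' / real n)) \<le> (\<Sum>i<h. \<bar>s i\<bar> * (T / real n))"
    by (rule sum_mono)
  thus ?thesis
    by (simp add: T_def sum_divide_distrib[symmetric] sum_distrib_right[symmetric] power2_eq_square)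
qed

lemma fibre_sums_l1_bound:
  assumes S: "S \<subseteq> lift_vertices h n" and supp: "\<And>v. v \<notin> S \<Longrightarrow> x v = 0"
  shows "(\<Sum>i<h. \<bar>fibre_sum n x i\<bar>)^2 \<le> sq_norm S x * real (card S)"
proof -
  have "(\<Sum>i<h. \<bar>fibre_sum n x i\<bar>) \<le> (\<Sum>i<h. \<Sum>j<n. \<bar>x (i, j)\<bar>)"
    unfolding fibre_sum_def by (intro sum_mono sum_abs)
  also have "\<dots> = (\<Sum>v\<in>lift_vertices h n. \<bar>x v\<bar>)" by (rule sum_lift_vertices[symmetric])
  also have "\<dots> = (\<Sum>v\<in>S. \<bar>x v\<bar>)"
    by (rule sum.mono_neutral_cong_right[OF finite_lift_vertices S]) (auto simp: supp)
  finally have "(\<Sum>i<h. \<bar>fibre_sum n x i\<bar>)^2 \<le> (\<Sum>v\<in>S. \<bar>x v\<bar>)^2"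
    by (intro power_mono) (auto intro: sum_nonneg)
  also have "\<dots> \<le> (\<Sum>v\<in>S. \<bar>x v\<bar>^2) * real (card S)" by (rule sum_squared_le_sum_of_squares)
  also have "\<dots> = sq_norm S x * real (card S)" by (simp add: sq_norm_def)
  finally show ?thesis .
qed

text \<open>Every adjacency eigenvalue mu0 of an induced subgraph G[S] with |S| < n is at most
  lambda^*(G) + 1: the balanced part y of the zero-extended eigenvector x keeps
  Rayleigh quotient above mu0 - 1, with correction terms below t = (sum_i |s_i|)^2/n < |x|^2.\<close>

lemma induced_eigenvalue_le_lambda_star:
  assumes simple: "simple_graph_on h H" and lift: "is_lift h n H G"
    and S: "S \<subseteq> lift_vertices h n" and small: "card S < n"
    and eig: "adj_eigenvalue S G \<mu>0"
  shows "\<mu>0 - 1 \<le> lambda_star h n G"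
proof -
  define LV where "LV = lift_vertices h n"
  have finS: "finite S" using finite_subset[OF S finite_lift_vertices] .
  have n: "n > 0" using small by simp
  obtain x where x0: "\<exists>v\<in>S. x v \<noteq> 0" and xe: "\<forall>v\<in>S. adj_apply S G x v = \<mu>0 * x v"
    using eig by (auto simp: adj_eigenvalue_def)
  define x' where "x' = (\<lambda>v. if v \<in> S then x v else 0)"
  define X where "X = sq_norm S x"
  define s where "s = fibre_sum n x'"
  define t where "t = (\<Sum>i<h. \<bar>s i\<bar>)^2 / real n"
  define y where "y = balanced_part n x'"
  have X: "X > 0" unfolding X_def using x0 sq_norm_pos[OF finS] by blast
  have "sq_norm S x' = X" unfolding X_def by (rule sq_norm_cong) (simp add: x'_def)
  hence "(\<Sum>i<h. \<bar>s i\<bar>)^2 \<le> X * real (card S)"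
    using fibre_sums_l1_bound[OF S, of x'] by (simp add: s_def x'_def)
  also have "\<dots> < X * real n" using X small by simp
  finally have tX: "t < X" using n by (simp add: t_def divide_less_eq)
  have qx: "quad_form LV G x' = \<mu>0 * X"
    using quad_form_extend_zero[OF finite_lift_vertices S, of G x] quad_form_eigenvector[OF xe]
    by (simp add: LV_def x'_def X_def)
  have nx: "sq_norm LV x' = X"
    using sq_norm_extend_zero[OF finite_lift_vertices S, of x] by (simp add: LV_def x'_def X_def)
  have qy: "\<mu>0 * X - t \<le> quad_form LV G y"
    using quad_form_balanced_part[OF lift n, of x'] qx
      base_correction_le_l1_squared[OF simple, where s=s and n=n]
    by (simp add: LV_def y_def s_def t_def)
  define p where "p = (\<Sum>i<h. (s i)^2 / real n)"
  have "sq_norm LV y = X - p"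
    using sq_norm_balanced_part[OF n, of h x'] nx by (simp add: LV_def y_def p_def s_def)
  moreover have "0 \<le> p" "p \<le> t"
    unfolding p_def t_def by (simp add: sum_nonneg) (rule sum_squares_le_l1_squared)
  ultimately have ny: "0 < sq_norm LV y" "sq_norm LV y \<le> X" using tX by linarith+
  obtain \<mu> where new: "new_eigenvalue h n G \<mu>" and rayleigh: "quad_form LV G y \<le> \<mu> * sq_norm LV y"
    using balanced_rayleigh_bound[OF lift balanced_part_balanced[OF n], of x'] nonzero_of_sq_norm_pos[OF ny(1)]
    unfolding LV_def y_def by blast
  have "\<mu>0 - 1 \<le> \<bar>\<mu>\<bar>"
  proof (cases "\<mu>0 \<le> 1")
    case False
    hence "(\<mu>0 - 1) * sq_norm LV y \<le> (\<mu>0 - 1) * X" using ny(2) by simp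
    also have "\<dots> < quad_form LV G y" using qy tX by argo
    also have "\<dots> \<le> \<mu> * sq_norm LV y" by (rule rayleigh)
    finally have "\<mu>0 - 1 < \<mu>" using ny(1) by simp
    thus ?thesis by simp
  qed simp
  thus ?thesis using new_eigenvalue_le_lambda_star[OF new] by simp
qed

theorem proposition1p3:
  fixes h n d :: nat
    and H :: "nat \<Rightarrow> nat \<Rightarrow> bool"
    and G :: "nat \<times> nat \<Rightarrow> nat \<times> nat \<Rightarrow> bool"
    and S :: "(nat \<times> nat) set"
  assumes "regular_graph h H d"
    and "is_lift h n H G"
    and "S \<subseteq> lift_vertices h n"
    and "S \<noteq> {}"
    and "real (card S) \<le> real n - real h * sqrt (real n)"
  shows "lambda_star h n G \<ge> lambda_max S G - 7 / 2"
proof -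
  have simple: "simple_graph_on h H" using assms(1) by (simp add: regular_graph_def)
  have finS: "finite S" using finite_subset[OF assms(3) finite_lift_vertices] .
  have "h > 0" "n > 0" using assms(3,4) by (auto simp: lift_vertices_def)
  hence "real h * sqrt (real n) > 0" by simp
  hence "card S < n" using assms(5) by linarith
  moreover have "adj_eigenvalue S G (lambda_max S G)"
    by (rule lambda_max_is_eigenvalue[OF finS assms(4)]) (use lift_sym[OF assms(2)] in blast)
  ultimately have "lambda_max S G - 1 \<le> lambda_star h n G"
    using induced_eigenvalue_le_lambda_star[OF simple assms(2,3)] by blast
  thus ?thesis by simp
qed

end
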